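(* For every nonzero $Q(X,Y)\in M_{s,\ell}$, $\mathrm{wdeg}_{1,k-1}Q(X,Y)=\mathrm{wdeg}_{1,-1}\varphi(Q(X,Y))+sk$.
   Context: Let $\mathbb F_q$ be a finite field, $1\le k<n<q$, $\alpha_0,\dots,\alpha_{n-1}$ distinct nonzero elements of $\mathbb F_q$, $w_0,\dots,w_{n-1}$ nonzero elements of $\mathbb F_q$, and $r\in\mathbb F_q^n$ a word with $r_i=0$ for $i=0,\dots,k-1$; let $r_i'=r_i/w_i$. For positive integers $s\le\ell$, $M_{s,\ell}$ is the $\mathbb F_q[X]$-module of all $Q\in\mathbb F_q[X,Y]$ of $Y$-degree at most $\ell$ such that for each $i$, $Q(X+\alpha_i,Y+r_i')$ has no monomials of total degree less than $s$. Let $L(X)=\prod_{i=0}^{k-1}(X-\alpha_i)$ and $\varphi(Q)(X,Y)=L(X)^{-s}Q(X,L(X)Y)$ for $Q\in M_{s,\ell}$ (under the assumption on $r$, $\varphi(Q)\in\mathbb F_q[X,Y]$). For integers $u,v$, $\mathrm{wdeg}_{u,v}$ of a nonzero bivariate polynomial is the maximum of $ui+vj$ over its monomials $X^iY^j$. *)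

theory Defs
  imports "HOL-Computational_Algebra.Polynomial" "HOL-Library.Cardinality"
begin

text \<open>Bivariate polynomials in F[X,Y] are represented as elements of type
  ('a poly) poly: the outer variable is Y, the inner one is X. So
  coeff (coeff Q j) i is the coefficient of the monomial X^i Y^j.\<close>

definition bcoeff :: "'a::zero poly poly \<Rightarrow> nat \<Rightarrow> nat \<Rightarrow> 'a" where
  "bcoeff Q i j = coeff (coeff Q j) i"

definition shiftXY :: "'a::comm_ring_1 \<Rightarrow> 'a \<Rightarrow> 'a poly poly \<Rightarrow> 'a poly poly" where
  "shiftXY a b Q = map_poly (\<lambda>p. pcompose p [:a, 1:]) (pcompose Q [:[:b:], 1:])"

definition no_low_monomials :: "nat \<Rightarrow> 'a::zero poly poly \<Rightarrow> bool" where
  "no_low_monomials s Q \<longleftrightarrow> (\<forall>i j. i + j < s \<longrightarrow> bcoeff Q i j = 0)"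

definition M_sl :: "nat \<Rightarrow> nat \<Rightarrow> nat \<Rightarrow> (nat \<Rightarrow> 'a::field) \<Rightarrow> (nat \<Rightarrow> 'a) \<Rightarrow> (nat \<Rightarrow> 'a)
    \<Rightarrow> 'a poly poly set" where
  "M_sl s l n alpha w r =
     {Q. degree Q \<le> l \<and> (\<forall>i<n. no_low_monomials s (shiftXY (alpha i) (r i / w i) Q))}"

definition wdeg :: "int \<Rightarrow> int \<Rightarrow> 'a::zero poly poly \<Rightarrow> int" where
  "wdeg u v Q = Max {u * int i + v * int j | i j. bcoeff Q i j \<noteq> 0}"

definition Lpoly :: "nat \<Rightarrow> (nat \<Rightarrow> 'a::comm_ring_1) \<Rightarrow> 'a poly" where
  "Lpoly k alpha = (\<Prod>i<k. [:- alpha i, 1:])"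

text \<open>phi(Q)(X,Y) = L(X)^{-s} Q(X, L(X) Y): the coefficient of Y^j is
  Q_j(X) L(X)^j / L(X)^s (an exact division under the standing assumptions).\<close>
definition phi :: "nat \<Rightarrow> nat \<Rightarrow> (nat \<Rightarrow> 'a::field) \<Rightarrow> 'a poly poly \<Rightarrow> 'a poly poly" where
  "phi k s alpha Q = Poly (map (\<lambda>j. (coeff Q j * Lpoly k alpha ^ j) div (Lpoly k alpha ^ s))
                               [0..<Suc (degree Q)])"

end

theory Submission
  imports Defs
begin

text \<open>For \<open>i < k\<close> the shifted word vanishes, so \<open>Q(X + \<alpha>\<^sub>i, Y)\<close> has no monomials of total
  degree below \<open>s\<close>; hence \<open>(X - \<alpha>\<^sub>i)\<^sup>s\<^sup>-\<^sup>j\<close> divides the coefficient \<open>Q\<^sub>j\<close> of \<open>Y\<^sup>j\<close>, and since the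
  \<open>\<alpha>\<^sub>i\<close> are distinct, so does \<open>L\<^sup>s\<^sup>-\<^sup>j\<close>. Thus the division in \<open>\<phi>\<close> is exact, the coefficient of
  \<open>Y\<^sup>j\<close> in \<open>\<phi>(Q)\<close> is nonzero exactly when \<open>Q\<^sub>j\<close> is, and its degree is \<open>deg Q\<^sub>j + k(j - s)\<close>.
  Maximising \<open>deg Q\<^sub>j + (k - 1) j\<close> over the support therefore equals maximising
  \<open>deg \<phi>(Q)\<^sub>j - j\<close> up to the constant \<open>sk\<close>.\<close>

lemma pcompose_power: "pcompose (p ^ m) q = pcompose p q ^ m"
  by (induction m) (simp_all add: pcompose_mult pcompose_1)

lemma linear_power_dvdI:
  fixes p :: "'a::field poly"
  assumes "\<forall>i<m. coeff (pcompose p [:a, 1:]) i = 0"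
  shows "[:-a, 1:] ^ m dvd p"
proof -
  have "monom 1 m dvd pcompose p [:a, 1:]"
    using assms monom_1_dvd_iff' by blast
  then obtain g where g: "pcompose p [:a, 1:] = monom 1 m * g"
    by (auto elim: dvdE)
  have shift_back: "pcompose [:a, 1:] [:-a, 1:] = [:0, 1:]"
    by (simp add: pcompose_pCons)
  have "p = pcompose (pcompose p [:a, 1:]) [:-a, 1:]"
    by (simp add: pcompose_assoc[symmetric] shift_back)
  also have "\<dots> = [:-a, 1:] ^ m * pcompose g [:-a, 1:]"
    by (simp add: g pcompose_mult monom_altdef pcompose_power pcompose_pCons)
  finally show ?thesis
    by (metis dvd_triv_left)
qed

lemma prod_linear_power_dvd:
  fixes p :: "'a::field poly"
  assumes "finite A" "inj_on alpha A" "\<forall>i\<in>A. [:-alpha i, 1:] ^ m dvd p"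
  shows "(\<Prod>i\<in>A. [:-alpha i, 1:]) ^ m dvd p"
proof (cases "p = 0")
  case False
  have "(\<Prod>i\<in>A. [:-alpha i, 1:] ^ m) dvd p"
    using assms
  proof (induction A rule: finite_induct)
    case empty
    then show ?case by simp
  next
    case (insert a A)
    let ?P = "\<Prod>i\<in>A. [:-alpha i, 1:] ^ m"
    have "?P dvd p"
      using insert by (auto intro: inj_on_subset)
    then obtain q where q: "p = ?P * q"
      by (auto elim: dvdE)
    have "poly ?P (alpha a) \<noteq> 0"
      using insert.prems(1) insert.hyps by (auto simp: poly_prod)
    then have "order (alpha a) ?P = 0"
      by (simp add: order_root)
    moreover have "m \<le> order (alpha a) p"
      using insert.prems(2) False order_divides by blast
    ultimately have "m \<le> order (alpha a) q"
      using order_mult[of ?P q "alpha a"] q False by simp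
    then have "[:-alpha a, 1:] ^ m dvd q"
      using order_divides by blast
    then show ?case
      using q insert.hyps by (simp add: mult_dvd_mono)
  qed
  then show ?thesis
    by (simp add: prod_power_distrib)
qed simp

lemma Lpoly_power_dvd_coeff:
  fixes alpha w r :: "nat \<Rightarrow> 'a::field"
  assumes "Q \<in> M_sl s l n alpha w r" "k \<le> n" "inj_on alpha {..<k}" "\<forall>i<k. r i = 0"
  shows "Lpoly k alpha ^ (s - j) dvd coeff Q j"
  unfolding Lpoly_def
proof (intro prod_linear_power_dvd[OF _ assms(3)] ballI)
  fix i assume "i \<in> {..<k}"
  then have "i < n" "r i = 0"
    using assms(2,4) by auto
  have "no_low_monomials s (shiftXY (alpha i) (r i / w i) Q)"
    using assms(1) \<open>i < n\<close> by (simp add: M_sl_def)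
  then have "no_low_monomials s (shiftXY (alpha i) 0 Q)"
    using \<open>r i = 0\<close> by simp
  then show "[:-alpha i, 1:] ^ (s - j) dvd coeff Q j"
    by (intro linear_power_dvdI)
       (auto simp: no_low_monomials_def bcoeff_def shiftXY_def coeff_map_poly)
qed simp

lemma coeff_phi:
  "coeff (phi k s alpha Q) j = coeff Q j * Lpoly k alpha ^ j div Lpoly k alpha ^ s"
  by (cases "j \<le> degree Q")
     (simp_all add: phi_def nth_default_def coeff_eq_0 del: upt_Suc)

lemma coeff_phi_nonzero_degree:
  fixes alpha :: "nat \<Rightarrow> 'a::field"
  assumes "Lpoly k alpha ^ s dvd coeff Q j * Lpoly k alpha ^ j"
  shows "coeff (phi k s alpha Q) j \<noteq> 0 \<longleftrightarrow> coeff Q j \<noteq> 0"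
    and "coeff Q j \<noteq> 0 \<Longrightarrow>
      int (degree (coeff (phi k s alpha Q) j)) = int (degree (coeff Q j)) + int k * int j - int s * int k"
proof -
  let ?L = "Lpoly k alpha"
  have "?L \<noteq> 0"
    by (simp add: Lpoly_def)
  have deg_L: "degree ?L = k"
    by (simp add: Lpoly_def degree_prod_eq_sum_degree)
  have exact: "coeff Q j * ?L ^ j = ?L ^ s * coeff (phi k s alpha Q) j"
    using assms by (simp add: coeff_phi)
  then show nonzero: "coeff (phi k s alpha Q) j \<noteq> 0 \<longleftrightarrow> coeff Q j \<noteq> 0"
    using \<open>?L \<noteq> 0\<close> by (metis mult_eq_0_iff power_eq_0_iff)
  assume "coeff Q j \<noteq> 0"
  then have "degree (coeff Q j) + k * j = k * s + degree (coeff (phi k s alpha Q) j)"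
    using arg_cong[OF exact, of degree] nonzero \<open>?L \<noteq> 0\<close>
    by (simp add: degree_mult_eq degree_power_eq deg_L mult.commute)
  then show "int (degree (coeff (phi k s alpha Q) j)) = int (degree (coeff Q j)) + int k * int j - int s * int k"
    by (simp add: algebra_simps flip: of_nat_mult of_nat_add)
qed

lemma finite_nonzero_coeffs: "finite {j. coeff p j \<noteq> 0}"
  by (rule finite_subset[of _ "{..degree p}"]) (auto intro: le_degree)

lemma wdeg_1_eq_Max_degree_coeff:
  fixes Q :: "'a::zero poly poly"
  shows "wdeg 1 v Q = Max ((\<lambda>j. int (degree (coeff Q j)) + v * int j) ` {j. coeff Q j \<noteq> 0})"
proof -
  let ?S = "{1 * int i + v * int j | i j. bcoeff Q i j \<noteq> 0}"
  let ?D = "(\<lambda>j. int (degree (coeff Q j)) + v * int j) ` {j. coeff Q j \<noteq> 0}"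
  have support: "\<exists>i j. x = int i + v * int j \<and> coeff Q j \<noteq> 0 \<and> i \<le> degree (coeff Q j)"
    if "x \<in> ?S" for x
  proof -
    obtain i j where "x = int i + v * int j" and nz: "coeff (coeff Q j) i \<noteq> 0"
      using \<open>x \<in> ?S\<close> by (auto simp: bcoeff_def)
    moreover have "coeff Q j \<noteq> 0"
      using nz by auto
    moreover have "i \<le> degree (coeff Q j)"
      using nz by (rule le_degree)
    ultimately show ?thesis
      by blast
  qed
  have "?S \<subseteq> (\<lambda>(i, j). int i + v * int j) ` (\<Union>j\<le>degree Q. {..degree (coeff Q j)} \<times> {j})"
  proof
    fix x assume "x \<in> ?S"
    then obtain i j where "x = int i + v * int j" "coeff Q j \<noteq> 0" "i \<le> degree (coeff Q j)"
      using support by blast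
    moreover from \<open>coeff Q j \<noteq> 0\<close> have "j \<le> degree Q"
      by (rule le_degree)
    ultimately show "x \<in> (\<lambda>(i, j). int i + v * int j) ` (\<Union>j\<le>degree Q. {..degree (coeff Q j)} \<times> {j})"
      by force
  qed
  then have "finite ?S"
    by (rule finite_subset) auto
  moreover have "\<forall>x\<in>?S. \<exists>b\<in>?D. x \<le> b"
    using support by fastforce
  moreover have "\<forall>b\<in>?D. \<exists>x\<in>?S. b \<le> x"
  proof
    fix b assume "b \<in> ?D"
    then obtain j where "b = int (degree (coeff Q j)) + v * int j" "coeff Q j \<noteq> 0"
      by blast
    then have "b \<in> ?S"
      by (force simp: bcoeff_def)
    then show "\<exists>x\<in>?S. b \<le> x"
      by blast
  qed
  ultimately show ?thesis
    unfolding wdeg_def by (intro Max_eq_if finite_imageI finite_nonzero_coeffs)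
qed

lemma wdeg_1_shift:
  fixes P Q :: "'a::zero poly poly"
  assumes "Q \<noteq> 0"
    and "\<And>j. coeff P j \<noteq> 0 \<longleftrightarrow> coeff Q j \<noteq> 0"
    and "\<And>j. coeff Q j \<noteq> 0 \<Longrightarrow> int (degree (coeff P j)) = int (degree (coeff Q j)) + d * int j - c"
  shows "wdeg 1 v P = wdeg 1 (v + d) Q - c"
proof -
  let ?J = "{j. coeff Q j \<noteq> 0}"
  let ?f = "\<lambda>j. int (degree (coeff Q j)) + (v + d) * int j"
  have "?J \<noteq> {}"
    using assms(1) leading_coeff_0_iff by blast
  have "wdeg 1 v P = Max ((\<lambda>x. x - c) ` ?f ` ?J)"
    unfolding wdeg_1_eq_Max_degree_coeff assms(2) image_image
    by (intro arg_cong[where f = Max] image_cong) (simp_all add: assms(3) algebra_simps)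
  also have "\<dots> = Max (?f ` ?J) - c"
    using \<open>?J \<noteq> {}\<close>
    by (intro mono_Max_commute[symmetric] finite_imageI finite_nonzero_coeffs) (simp_all add: mono_def)
  finally show ?thesis
    unfolding wdeg_1_eq_Max_degree_coeff .
qed

theorem lemma12:
  fixes alpha w r :: "nat \<Rightarrow> 'a::{finite,field}"
    and n k s l :: nat
    and Q :: "'a poly poly"
  assumes "1 \<le> k" "k < n" "n < CARD('a)"
    and "inj_on alpha {..<n}" "\<forall>i<n. alpha i \<noteq> 0"
    and "\<forall>i<n. w i \<noteq> 0"
    and "\<forall>i<k. r i = 0"
    and "0 < s" "s \<le> l"
    and "Q \<in> M_sl s l n alpha w r" "Q \<noteq> 0"
  shows "wdeg 1 (int k - 1) Q = wdeg 1 (-1) (phi k s alpha Q) + int s * int k"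
proof -
  let ?L = "Lpoly k alpha"
  have "inj_on alpha {..<k}"
    using assms(2,4) by (auto intro: inj_on_subset)
  then have "?L ^ (s - j) dvd coeff Q j" for j
    using Lpoly_power_dvd_coeff[OF assms(10) less_imp_le[OF assms(2)] _ assms(7)] by blast
  moreover have "?L ^ s dvd ?L ^ (s - j) * ?L ^ j" for j
    by (simp add: le_imp_power_dvd flip: power_add)
  ultimately have "?L ^ s dvd coeff Q j * ?L ^ j" for j
    by (meson dvd_trans mult_dvd_mono dvd_refl)
  then have "wdeg 1 (-1) (phi k s alpha Q) = wdeg 1 (-1 + int k) Q - int s * int k"
    by (intro wdeg_1_shift assms(11) coeff_phi_nonzero_degree)
  then show ?thesis
    by simp
qed

end
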